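(* For every integer $n\geq2$, $\mathcal{M}^{\perp}\cap HC(W_n^{*})=\varnothing$.
   Context: $H^2$ denotes the Hardy space of analytic functions $f(z)=\sum_{j\ge0}\hat f(j)z^j$ on the open unit disk $\mathbb{D}$ with $\sum_{j}|\hat f(j)|^2<\infty$. For $n\in\mathbb{N}$, $W_n$ is the bounded operator on $H^2$ given by $W_nf(z)=(1+z+\cdots+z^{n-1})f(z^n)$, $W_n^{*}$ is its adjoint, and $HC(W_n^{*})$ is the set of vectors with dense orbit under $W_n^{*}$. For each integer $k\geq2$, $h_k(z)=\frac{1}{1-z}\log\left(\frac{1+z+\cdots+z^{k-1}}{k}\right)$ (holomorphic branch of the logarithm on $\mathbb{D}$, real at $z=0$), which lies in $H^2$; $\mathcal{M}=\mathrm{span}\{h_k-h_\ell:k,\ell\geq2\}$ and $\mathcal{M}^\perp$ is its orthogonal complement in $H^2$. *)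

theory Defs
  imports "HOL-Complex_Analysis.Complex_Analysis"
begin

text \<open>Elements of H^2 are identified with their Taylor coefficient sequences
  f = (hat f 0, hat f 1, ...), the function being z |-> sum_j hat f j * z^j on the unit disk.\<close>

definition H2 :: "(nat \<Rightarrow> complex) set" where
  "H2 = {a. summable (\<lambda>j. (cmod (a j))^2)}"

definition h2_inner :: "(nat \<Rightarrow> complex) \<Rightarrow> (nat \<Rightarrow> complex) \<Rightarrow> complex" where
  "h2_inner a b = (\<Sum>j. a j * cnj (b j))"

definition h2_norm :: "(nat \<Rightarrow> complex) \<Rightarrow> real" where
  "h2_norm a = sqrt (\<Sum>j. (cmod (a j))^2)"

definition taylor_coeff :: "(complex \<Rightarrow> complex) \<Rightarrow> nat \<Rightarrow> complex" where
  "taylor_coeff F j = (deriv ^^ j) F 0 / of_nat (fact j)"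

definition h2_fun :: "(nat \<Rightarrow> complex) \<Rightarrow> complex \<Rightarrow> complex" where
  "h2_fun a z = (\<Sum>j. a j * z ^ j)"

definition W :: "nat \<Rightarrow> (nat \<Rightarrow> complex) \<Rightarrow> (nat \<Rightarrow> complex)" where
  "W n a = taylor_coeff (\<lambda>z. (\<Sum>i<n. z ^ i) * h2_fun a (z ^ n))"

definition Wstar :: "nat \<Rightarrow> (nat \<Rightarrow> complex) \<Rightarrow> (nat \<Rightarrow> complex)" where
  "Wstar n b = (THE c. c \<in> H2 \<and> (\<forall>a\<in>H2. h2_inner (W n a) b = h2_inner a c))"

definition HC :: "((nat \<Rightarrow> complex) \<Rightarrow> (nat \<Rightarrow> complex)) \<Rightarrow> (nat \<Rightarrow> complex) set" where
  "HC T = {f \<in> H2. \<forall>g\<in>H2. \<forall>e>0. \<exists>m. h2_norm (\<lambda>j. (T ^^ m) f j - g j) < e}"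

definition logbr :: "nat \<Rightarrow> complex \<Rightarrow> complex" where
  "logbr k = (SOME g. g holomorphic_on ball 0 1 \<and>
      (\<forall>z\<in>ball 0 1. exp (g z) = (\<Sum>i<k. z ^ i) / of_nat k) \<and> g 0 \<in> \<real>)"

definition h :: "nat \<Rightarrow> (nat \<Rightarrow> complex)" where
  "h k = taylor_coeff (\<lambda>z. logbr k z / (1 - z))"

definition cspan_seq :: "(nat \<Rightarrow> complex) set \<Rightarrow> (nat \<Rightarrow> complex) set" where
  "cspan_seq G = {x. \<exists>S c. finite S \<and> S \<subseteq> G \<and> x = (\<lambda>j. \<Sum>g\<in>S. c g * g j)}"

definition Mspace :: "(nat \<Rightarrow> complex) set" where
  "Mspace = cspan_seq {(\<lambda>j. h k j - h l j) | k l. k \<ge> 2 \<and> l \<ge> 2}"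

definition Mperp :: "(nat \<Rightarrow> complex) set" where
  "Mperp = {f \<in> H2. \<forall>m\<in>Mspace. h2_inner f m = 0}"

end

theory Submission
  imports Defs
begin

text \<open>
  Let u = h_4 - h_2. With w = z^n one has
  (1 + z + ... + z^(n-1)) (1 + w + ... + w^(k-1)) = 1 + z + ... + z^(kn-1), so the
  logarithm branches satisfy log_k (z^n) = log_kn z - log_n z; together with
  (1 + z + ... + z^(n-1)) / (1 - z^n) = 1 / (1 - z) this gives W_n (h_k - h_l) = h_kn - h_ln.
  Hence every W_n^m u lies in M, and for f in M^perp we get
  <W_n*^m f, u> = <f, W_n^m u> = 0, so by Pythagoras the orbit of f stays at distance
  at least ||u|| > 0 from u.
  That u lies in H^2 is checked by hand: it is the coefficient sequence of
  (log (1 + z^2) - log 2) / (1 - z), whose coefficients are remainders of the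
  alternating harmonic series and hence O(1/j).
\<close>

section \<open>Geometric sums and branches of the logarithm\<close>

lemma sum_power_block:
  fixes z :: "'a::comm_semiring_1"
  shows "(\<Sum>j\<in>{m..<m + n}. z ^ j) = z ^ m * (\<Sum>r<n. z ^ r)"
  by (induction n) (simp_all add: power_add distrib_left)

lemma sum_power_mult:
  fixes z :: "'a::comm_semiring_1"
  shows "(\<Sum>i<k * n. z ^ i) = (\<Sum>i<n. z ^ i) * (\<Sum>q<k. (z ^ n) ^ q)"
proof -
  have "(\<Sum>i<k * n. z ^ i) = (\<Sum>q<k. \<Sum>j\<in>{q * n..<q * n + n}. z ^ j)"
    by (rule sum.nat_group[symmetric])
  also have "\<dots> = (\<Sum>q<k. (\<Sum>r<n. z ^ r) * (z ^ n) ^ q)"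
    by (intro sum.cong refl) (simp add: sum_power_block mult.commute flip: power_mult)
  finally show ?thesis
    by (simp only: sum_distrib_left)
qed

lemma power_in_unit_disc: "z \<in> ball (0::complex) 1 \<Longrightarrow> n \<ge> 1 \<Longrightarrow> z ^ n \<in> ball 0 1"
  by (simp add: norm_power power_less_one_iff)

lemma sum_power_nonzero:
  assumes "z \<in> ball (0::complex) 1" "k \<ge> 1"
  shows "(\<Sum>i<k. z ^ i) \<noteq> 0"
  using one_diff_power_eq[of z k] power_in_unit_disc[OF assms] by auto

lemma exp_eq_imp_eq_on_connected:
  fixes f g :: "'a::topological_space \<Rightarrow> complex"
  assumes S: "connected S" and cont: "continuous_on S f" "continuous_on S g"
    and exp_fg: "\<And>x. x \<in> S \<Longrightarrow> exp (f x) = exp (g x)"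
    and "a \<in> S" "f a = g a" "z \<in> S"
  shows "f z = g z"
proof -
  let ?d = "\<lambda>x. f x - g x"
  have period: "\<exists>p::int. ?d x = of_int p * (2 * pi * \<i>)" if x: "x \<in> S" for x
  proof -
    obtain p :: int where "f x = g x + of_int (2 * p) * pi * \<i>"
      using exp_fg[OF x] unfolding exp_eq by blast
    then show ?thesis
      by auto
  qed
  have "?d constant_on S"
  proof (rule continuous_discrete_range_constant[OF S])
    show "continuous_on S ?d"
      using cont by (intro continuous_intros)
    fix x assume "x \<in> S"
    then obtain p where p: "?d x = of_int p * (2 * pi * \<i>)"
      using period by blast
    show "\<exists>e>0. \<forall>y. y \<in> S \<and> ?d y \<noteq> ?d x \<longrightarrow> e \<le> norm (?d y - ?d x)"
    proof (intro exI[of _ "2 * pi"] conjI allI impI)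
      fix y assume y: "y \<in> S \<and> ?d y \<noteq> ?d x"
      then obtain q where q: "?d y = of_int q * (2 * pi * \<i>)"
        using period by blast
      with p y have "q \<noteq> p"
        by auto
      then have "1 \<le> \<bar>real_of_int (q - p)\<bar>"
        by (metis of_int_1_le_iff of_int_abs zero_less_abs_iff int_one_le_iff_zero_less right_minus_eq)
      moreover have "?d y - ?d x = complex_of_real (2 * pi * of_int (q - p)) * \<i>"
        unfolding p q by (simp add: algebra_simps)
      then have "norm (?d y - ?d x) = 2 * pi * \<bar>real_of_int (q - p)\<bar>"
        by (simp only: norm_mult norm_ii norm_of_real abs_mult) simp
      ultimately show "2 * pi \<le> norm (?d y - ?d x)"
        by simp
    qed simp
  qed
  then have "?d z = ?d a"
    using \<open>a \<in> S\<close> \<open>z \<in> S\<close> unfolding constant_on_def by auto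
  with \<open>f a = g a\<close> show ?thesis
    by simp
qed

lemma logbr_exists:
  assumes "k \<ge> 1"
  shows "\<exists>g. g holomorphic_on ball 0 1 \<and>
      (\<forall>z\<in>ball 0 1. exp (g z) = (\<Sum>i<k. z ^ i) / of_nat k) \<and> g 0 \<in> \<real>"
proof -
  let ?F = "\<lambda>z::complex. (\<Sum>i<k. z ^ i) / of_nat k"
  have hol: "?F holomorphic_on ball 0 1"
    using assms by (intro holomorphic_intros) auto
  have nonzero: "?F z \<noteq> 0" if "z \<in> ball 0 1" for z
    using sum_power_nonzero[OF that assms] assms by simp
  obtain g where g: "g holomorphic_on ball 0 1" "\<And>z. z \<in> ball 0 1 \<Longrightarrow> ?F z = exp (g z)"
    using contractible_imp_holomorphic_log[OF hol convex_imp_contractible[OF convex_ball] nonzero]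
    by blast
  have exp_g0: "exp (g 0) = 1 / of_nat k"
    using g(2)[of 0] assms by (simp add: power_0_left)
  define g' where "g' z = g z - g 0 - of_real (ln (real k))" for z
  have "exp (g' z) = ?F z" if "z \<in> ball 0 1" for z
    using assms g(2)[OF that] exp_g0 by (simp add: g'_def exp_diff exp_of_real)
  moreover have "g' holomorphic_on ball 0 1"
    unfolding g'_def using g(1) by (intro holomorphic_intros)
  moreover have "g' 0 \<in> \<real>"
    by (simp add: g'_def)
  ultimately show ?thesis
    by blast
qed

lemma
  assumes "k \<ge> 1"
  shows logbr_holomorphic: "logbr k holomorphic_on ball 0 1"
    and logbr_exp: "z \<in> ball 0 1 \<Longrightarrow> exp (logbr k z) = (\<Sum>i<k. z ^ i) / of_nat k"
    and logbr_at_0_real: "logbr k 0 \<in> \<real>"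
  using someI_ex[OF logbr_exists[OF assms]] unfolding logbr_def by blast+

lemma logbr_continuous: "k \<ge> 1 \<Longrightarrow> continuous_on (ball 0 1) (logbr k)"
  by (rule holomorphic_on_imp_continuous_on[OF logbr_holomorphic])

lemma logbr_at_0:
  assumes "k \<ge> 1"
  shows "logbr k 0 = - of_real (ln (real k))"
proof -
  obtain r where r: "logbr k 0 = of_real r"
    using logbr_at_0_real[OF assms] by (auto elim!: Reals_cases)
  have "exp (logbr k 0) = 1 / of_nat k"
    using logbr_exp[OF assms, of 0] assms by (simp add: power_0_left)
  then have "of_real (exp r) = (of_real (1 / real k) :: complex)"
    unfolding r exp_of_real by simp
  then have "r = ln (1 / real k)"
    by (metis of_real_eq_iff ln_exp)
  then have "r = - ln (real k)"
    using assms by (simp add: ln_div)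
  then show ?thesis
    using r by simp
qed

lemma logbr_power:
  assumes k: "k \<ge> 1" and n: "n \<ge> 1" and z: "z \<in> ball 0 1"
  shows "logbr k (z ^ n) = logbr (k * n) z - logbr n z"
proof (rule exp_eq_imp_eq_on_connected[OF connected_ball _ _ _ centre_in_ball[THEN iffD2] _ z])
  show "continuous_on (ball 0 1) (\<lambda>z. logbr k (z ^ n))"
    using power_in_unit_disc[OF _ n]
    by (intro continuous_on_compose2[OF logbr_continuous[OF k]] continuous_intros) auto
  show "continuous_on (ball 0 1) (\<lambda>z. logbr (k * n) z - logbr n z)"
    using k n by (intro continuous_intros logbr_continuous) auto
  show "exp (logbr k (w ^ n)) = exp (logbr (k * n) w - logbr n w)" if w: "w \<in> ball 0 1" for w
  proof -
    have "k * n \<ge> 1"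
      using k n by simp
    show ?thesis
      unfolding exp_diff logbr_exp[OF k power_in_unit_disc[OF w n]] logbr_exp[OF n w]
        logbr_exp[OF \<open>k * n \<ge> 1\<close> w] sum_power_mult
      using k n sum_power_nonzero[OF w n] by (simp add: field_simps)
  qed
  show "logbr k (0 ^ n) = logbr (k * n) 0 - logbr n 0"
    using k n by (simp add: logbr_at_0 ln_mult power_0_left)
qed simp

lemma logbr_4_minus_logbr_2:
  assumes z: "z \<in> ball 0 1"
  shows "logbr 4 z - logbr 2 z = ln (1 + z\<^sup>2) - of_real (ln 2)"
proof (rule exp_eq_imp_eq_on_connected[OF connected_ball _ _ _ centre_in_ball[THEN iffD2] _ z])
  have Re_pos: "0 < Re (1 + w\<^sup>2)" if "w \<in> ball 0 1" for w :: complex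
  proof -
    have "cmod (w\<^sup>2) < 1"
      using that by (simp add: norm_power power_less_one_iff)
    then show ?thesis
      using abs_Re_le_cmod[of "w\<^sup>2"] by (auto simp: abs_le_iff)
  qed
  then have not_nonpos: "1 + w\<^sup>2 \<notin> \<real>\<^sub>\<le>\<^sub>0" if "w \<in> ball 0 1" for w :: complex
    using that by (force simp: complex_nonpos_Reals_iff)
  show "continuous_on (ball 0 1) (\<lambda>z. logbr 4 z - logbr 2 z)"
    by (intro continuous_intros logbr_continuous) auto
  show "continuous_on (ball 0 1) (\<lambda>z::complex. ln (1 + z\<^sup>2) - of_real (ln 2))"
    using not_nonpos by (intro continuous_intros continuous_on_Ln') auto
  show "exp (logbr 4 w - logbr 2 w) = exp (ln (1 + w\<^sup>2) - of_real (ln 2))" if w: "w \<in> ball 0 1" for w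
  proof -
    have "1 + w \<noteq> 0"
      using sum_power_nonzero[OF w, of 2] by (simp add: numeral_2_eq_2)
    have "1 + w\<^sup>2 \<noteq> 0"
      using Re_pos[OF w] by (metis less_irrefl zero_complex.sel(1))
    have cancel: "a * b / 4 / (a / 2) = b / 2" if "a \<noteq> 0" for a b :: complex
      using that by simp
    have "(\<Sum>i<4. w ^ i) = (1 + w) * (1 + w\<^sup>2)" "(\<Sum>i<2. w ^ i) = 1 + w"
      by (simp_all add: eval_nat_numeral algebra_simps)
    then have "exp (logbr 4 w - logbr 2 w) = ((1 + w) * (1 + w\<^sup>2) / 4) / ((1 + w) / 2)"
      using w by (simp add: exp_diff logbr_exp)
    also have "\<dots> = (1 + w\<^sup>2) / 2"
      using \<open>1 + w \<noteq> 0\<close> by (rule cancel)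
    also have "\<dots> = exp (ln (1 + w\<^sup>2) - of_real (ln 2))"
      using \<open>1 + w\<^sup>2 \<noteq> 0\<close> by (simp add: exp_diff exp_of_real)
    finally show ?thesis .
  qed
  show "logbr 4 0 - logbr 2 0 = ln (1 + 0\<^sup>2) - of_real (ln 2)"
    using ln_mult[of 2 2] by (simp add: logbr_at_0)
qed simp

section \<open>Taylor coefficients\<close>

lemma taylor_coeff_cong:
  assumes "r > 0" "\<And>z. z \<in> ball 0 r \<Longrightarrow> F z = G z"
  shows "taylor_coeff F = taylor_coeff G"
proof
  fix j
  have "eventually (\<lambda>z. z \<in> ball 0 r) (nhds (0::complex))"
    using assms(1) by (intro eventually_nhds_in_open) auto
  then have "eventually (\<lambda>z. F z = G z) (nhds 0)"
    by eventually_elim (use assms in auto)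
  then show "taylor_coeff F j = taylor_coeff G j"
    unfolding taylor_coeff_def by (simp add: higher_deriv_cong_ev)
qed

lemma taylor_coeff_diff:
  assumes "F holomorphic_on ball 0 r" "G holomorphic_on ball 0 r" "r > 0"
  shows "taylor_coeff (\<lambda>z. F z - G z) j = taylor_coeff F j - taylor_coeff G j"
  unfolding taylor_coeff_def using assms
  by (subst higher_deriv_diff[of F "ball 0 r" G]) (auto simp: diff_divide_distrib)

lemma taylor_coeff_0: "taylor_coeff F 0 = F 0"
  by (simp add: taylor_coeff_def)

lemma h2_fun_taylor_coeff:
  assumes "F holomorphic_on ball 0 1" "z \<in> ball 0 1"
  shows "h2_fun (taylor_coeff F) z = F z"
  using holomorphic_power_series[OF assms]
  unfolding h2_fun_def taylor_coeff_def by (simp add: sums_iff)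

lemma taylor_coeff_eqI:
  assumes r: "r > 0" and sums: "\<And>z. z \<in> ball 0 r \<Longrightarrow> (\<lambda>j. c j * z ^ j) sums F z"
  shows "taylor_coeff F = c"
proof -
  have "fps_conv_radius (Abs_fps c) \<ge> ereal r"
    unfolding fps_conv_radius_def
  proof (rule conv_radius_geI_ex)
    fix t :: real assume t: "0 < t" "ereal t < ereal r"
    show "\<exists>z. norm z = t \<and> summable (\<lambda>n. fps_nth (Abs_fps c) n * z ^ n)"
      using sums[of "of_real t"] t by (intro exI[of _ "of_real t"]) (auto simp: sums_iff)
  qed
  moreover have "eventually (\<lambda>z. z \<in> ball 0 r) (nhds (0::complex))"
    using r by (intro eventually_nhds_in_open) auto
  then have "eventually (\<lambda>z. eval_fps (Abs_fps c) z = F z) (nhds 0)"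
    by eventually_elim (use sums in \<open>auto simp: eval_fps_def sums_iff\<close>)
  ultimately have "F has_fps_expansion Abs_fps c"
    unfolding has_fps_expansion_def using r by (auto intro: less_le_trans[of 0 "ereal r"])
  then show ?thesis
    using fps_nth_fps_expansion[of F "Abs_fps c"] by (auto simp: taylor_coeff_def)
qed

section \<open>The Hardy space\<close>

lemma norm_coeff_le_h2_norm:
  assumes "a \<in> H2"
  shows "cmod (a j) \<le> h2_norm a"
proof -
  have "(\<Sum>i\<in>{j}. (cmod (a i))\<^sup>2) \<le> (\<Sum>i. (cmod (a i))\<^sup>2)"
    using assms by (intro sum_le_suminf) (auto simp: H2_def)
  then show ?thesis
    by (simp add: h2_norm_def real_le_rsqrt)
qed

lemma H2_summable_power_series:
  assumes "a \<in> H2" "norm z < 1"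
  shows "summable (\<lambda>j. a j * z ^ j)"
proof (rule summable_comparison_test')
  show "summable (\<lambda>j. h2_norm a * norm z ^ j)"
    using assms(2) by (intro summable_mult summable_geometric) simp
  show "norm (a j * z ^ j) \<le> h2_norm a * norm z ^ j" for j
    using norm_coeff_le_h2_norm[OF assms(1)] by (simp add: norm_mult norm_power mult_right_mono)
qed

lemma H2_summable_inner:
  assumes "a \<in> H2" "b \<in> H2"
  shows "summable (\<lambda>j. a j * cnj (b j))"
proof (rule summable_norm_cancel, rule summable_comparison_test')
  show "summable (\<lambda>j. (cmod (a j))\<^sup>2 + (cmod (b j))\<^sup>2)"
    using assms by (intro summable_add) (auto simp: H2_def)
  show "norm (norm (a j * cnj (b j))) \<le> (cmod (a j))\<^sup>2 + (cmod (b j))\<^sup>2" for j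
  proof -
    have "2 * (cmod (a j) * cmod (b j)) \<le> (cmod (a j))\<^sup>2 + (cmod (b j))\<^sup>2"
      using sum_squares_bound[of "cmod (a j)" "cmod (b j)"] by (simp add: mult.assoc)
    moreover have "0 \<le> cmod (a j) * cmod (b j)"
      by simp
    moreover have "norm (norm (a j * cnj (b j))) = cmod (a j) * cmod (b j)"
      by (simp add: norm_mult)
    ultimately show ?thesis
      by linarith
  qed
qed

lemma h2_inner_commute:
  assumes "a \<in> H2" "b \<in> H2"
  shows "h2_inner b a = cnj (h2_inner a b)"
proof -
  have "(\<lambda>j. cnj (a j * cnj (b j))) sums cnj (h2_inner a b)"
    unfolding sums_cnj h2_inner_def using H2_summable_inner[OF assms] by (rule summable_sums)
  then show ?thesis
    unfolding h2_inner_def by (simp add: sums_iff mult.commute)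
qed

lemma h2_norm_le_norm_diff_if_orthogonal:
  assumes x: "x \<in> H2" and u: "u \<in> H2" and orth: "h2_inner x u = 0"
  shows "h2_norm u \<le> h2_norm (\<lambda>j. x j - u j)"
proof -
  have sx: "summable (\<lambda>j. (cmod (x j))\<^sup>2)" and su: "summable (\<lambda>j. (cmod (u j))\<^sup>2)"
    using x u by (auto simp: H2_def)
  have "(\<lambda>j. Re (x j * cnj (u j))) sums 0"
    using sums_Re[OF summable_sums[OF H2_summable_inner[OF x u]]] orth by (simp add: h2_inner_def)
  then have "(\<lambda>j. (cmod (x j))\<^sup>2 + (cmod (u j))\<^sup>2 - 2 * Re (x j * cnj (u j))) sums
      ((\<Sum>j. (cmod (x j))\<^sup>2) + (\<Sum>j. (cmod (u j))\<^sup>2) - 2 * 0)"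
    by (intro sums_diff sums_add sums_mult summable_sums sx su)
  moreover have "(cmod (x j - u j))\<^sup>2 = (cmod (x j))\<^sup>2 + (cmod (u j))\<^sup>2 - 2 * Re (x j * cnj (u j))" for j
    by (simp add: cmod_power2 power2_diff algebra_simps)
  ultimately have "(\<Sum>j. (cmod (x j - u j))\<^sup>2) = (\<Sum>j. (cmod (x j))\<^sup>2) + (\<Sum>j. (cmod (u j))\<^sup>2)"
    by (simp add: sums_iff)
  moreover have "0 \<le> (\<Sum>j. (cmod (x j))\<^sup>2)"
    using suminf_nonneg[OF sx] by simp
  ultimately show ?thesis
    unfolding h2_norm_def by (simp add: real_sqrt_le_mono)
qed

lemma H2_delta: "(\<lambda>j. if j = q then 1 else 0) \<in> H2"
proof -
  have "(\<lambda>j. (cmod (if j = q then 1 else 0 :: complex))\<^sup>2) = (\<lambda>j. if j = q then 1 else 0)"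
    by auto
  then show ?thesis
    using summable_single[of q "\<lambda>_. 1::real"] by (simp add: H2_def)
qed

lemma h2_inner_delta: "h2_inner (\<lambda>j. if j = q then 1 else 0) c = cnj (c q)"
proof -
  have "(\<lambda>j. (if j = q then 1 else 0) * cnj (c j)) = (\<lambda>j. if j = q then cnj (c j) else 0)"
    by auto
  then show ?thesis
    using sums_single[of q "\<lambda>j. cnj (c j)"] by (simp add: h2_inner_def sums_iff)
qed

section \<open>The operator \<open>W\<^sub>n\<close> and its adjoint\<close>

lemma sum_block_div:
  fixes n q :: nat
  shows "(\<Sum>j\<in>{q * n..<q * n + n}. f (j div n) j) = (\<Sum>j\<in>{q * n..<q * n + n}. f q j)"
proof (intro sum.cong refl)
  fix j assume j: "j \<in> {q * n..<q * n + n}"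
  have "n * q \<le> j" "j < n * Suc q"
    using j by (auto simp: algebra_simps)
  then have "j div n = q"
    by (rule div_nat_eqI)
  then show "f (j div n) j = f q j"
    by simp
qed

lemma H2_stretch:
  assumes n: "n \<ge> 1" and a: "a \<in> H2"
  shows "(\<lambda>j. a (j div n)) \<in> H2"
proof -
  let ?f = "\<lambda>q. (cmod (a q))\<^sup>2"
  have "summable (\<lambda>j. ?f (j div n))"
  proof (rule bounded_imp_summable)
    fix N
    have "Suc N \<le> Suc N * n"
      using mult_le_mono2[OF n, of "Suc N"] by simp
    then have "{..N} \<subseteq> {..<Suc N * n}"
      by auto
    then have "(\<Sum>j\<le>N. ?f (j div n)) \<le> (\<Sum>j<Suc N * n. ?f (j div n))"
      by (intro sum_mono2) auto
    also have "\<dots> = (\<Sum>q<Suc N. \<Sum>j\<in>{q * n..<q * n + n}. ?f (j div n))"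
      by (rule sum.nat_group[symmetric])
    also have "\<dots> = (\<Sum>q<Suc N. of_nat n * ?f q)"
      by (intro sum.cong refl) (simp add: sum_block_div[where f = "\<lambda>q j. ?f q"])
    also have "\<dots> = of_nat n * (\<Sum>q<Suc N. ?f q)"
      by (rule sum_distrib_left[symmetric])
    also have "\<dots> \<le> of_nat n * (\<Sum>q. ?f q)"
      using a by (intro mult_left_mono sum_le_suminf) (auto simp: H2_def)
    finally show "(\<Sum>j\<le>N. ?f (j div n)) \<le> of_nat n * (\<Sum>q. ?f q)" .
  qed simp
  then show ?thesis
    by (simp add: H2_def)
qed

lemma W_eq:
  assumes n: "n \<ge> 1" and a: "a \<in> H2"
  shows "W n a = (\<lambda>j. a (j div n))"
  unfolding W_def
proof (rule taylor_coeff_eqI[OF zero_less_one])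
  fix z :: complex assume z: "z \<in> ball 0 1"
  have s: "summable (\<lambda>j. a (j div n) * z ^ j)"
    using H2_summable_power_series[OF H2_stretch[OF n a]] z by simp
  have "(\<lambda>q. \<Sum>j\<in>{q * n..<q * n + n}. a (j div n) * z ^ j) sums (\<Sum>j. a (j div n) * z ^ j)"
    using sums_group[OF summable_sums[OF s]] n by simp
  moreover have "(\<Sum>j\<in>{q * n..<q * n + n}. a (j div n) * z ^ j) = (\<Sum>r<n. z ^ r) * (a q * (z ^ n) ^ q)"
    for q
  proof -
    have "(\<Sum>j\<in>{q * n..<q * n + n}. a (j div n) * z ^ j) = a q * (\<Sum>j\<in>{q * n..<q * n + n}. z ^ j)"
      using sum_block_div[where f = "\<lambda>q j. a q * z ^ j"] by (simp add: sum_distrib_left)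
    then show ?thesis
      by (simp add: sum_power_block mult.commute[of q n] power_mult mult_ac)
  qed
  moreover have "(\<lambda>q. (\<Sum>r<n. z ^ r) * (a q * (z ^ n) ^ q)) sums ((\<Sum>r<n. z ^ r) * h2_fun a (z ^ n))"
    unfolding h2_fun_def using power_in_unit_disc[OF z n]
    by (intro sums_mult summable_sums H2_summable_power_series a) simp
  ultimately have "(\<Sum>j. a (j div n) * z ^ j) = (\<Sum>r<n. z ^ r) * h2_fun a (z ^ n)"
    using sums_unique2 by force
  then show "(\<lambda>j. a (j div n) * z ^ j) sums ((\<Sum>i<n. z ^ i) * h2_fun a (z ^ n))"
    using summable_sums[OF s] by simp
qed

lemma W_in_H2: "n \<ge> 1 \<Longrightarrow> a \<in> H2 \<Longrightarrow> W n a \<in> H2"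
  by (simp add: W_eq H2_stretch)

definition block_sum :: "nat \<Rightarrow> (nat \<Rightarrow> complex) \<Rightarrow> nat \<Rightarrow> complex" where
  "block_sum n b q = (\<Sum>j\<in>{q * n..<q * n + n}. b j)"

lemma block_sum_in_H2:
  assumes n: "n \<ge> 1" and b: "b \<in> H2"
  shows "block_sum n b \<in> H2"
proof -
  let ?g = "\<lambda>j. (cmod (b j))\<^sup>2"
  have "summable (\<lambda>q. (cmod (block_sum n b q))\<^sup>2)"
  proof (rule summable_comparison_test')
    have "summable (\<lambda>q. \<Sum>j\<in>{q * n..<q * n + n}. ?g j)"
      using b n by (intro sums_summable[OF sums_group] summable_sums) (auto simp: H2_def)
    then show "summable (\<lambda>q. real n * (\<Sum>j\<in>{q * n..<q * n + n}. ?g j))"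
      by (rule summable_mult)
    show "norm ((cmod (block_sum n b q))\<^sup>2) \<le> real n * (\<Sum>j\<in>{q * n..<q * n + n}. ?g j)" for q
    proof -
      have "(cmod (block_sum n b q))\<^sup>2 \<le> (\<Sum>j\<in>{q * n..<q * n + n}. 1 * cmod (b j))\<^sup>2"
        unfolding block_sum_def by (simp add: power_mono norm_sum)
      also have "\<dots> \<le> (\<Sum>j\<in>{q * n..<q * n + n}. 1\<^sup>2) * (\<Sum>j\<in>{q * n..<q * n + n}. ?g j)"
        by (rule Cauchy_Schwarz_ineq_sum)
      finally show ?thesis
        by simp
    qed
  qed
  then show ?thesis
    by (simp add: H2_def)
qed

lemma h2_inner_W:
  assumes n: "n \<ge> 1" and a: "a \<in> H2" and b: "b \<in> H2"
  shows "h2_inner (W n a) b = h2_inner a (block_sum n b)"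
proof -
  let ?f = "\<lambda>j. a (j div n) * cnj (b j)"
  have "summable ?f"
    using H2_summable_inner[OF H2_stretch[OF n a] b] .
  then have "(\<lambda>q. \<Sum>j\<in>{q * n..<q * n + n}. ?f j) sums (\<Sum>j. ?f j)"
    using n by (intro sums_group summable_sums) auto
  moreover have "(\<Sum>j\<in>{q * n..<q * n + n}. ?f j) = a q * cnj (block_sum n b q)" for q
    using sum_block_div[where f = "\<lambda>q j. a q * cnj (b j)"] by (simp add: block_sum_def sum_distrib_left)
  ultimately show ?thesis
    unfolding h2_inner_def W_eq[OF n a] by (simp add: sums_iff)
qed

lemma Wstar_eq_block_sum:
  assumes n: "n \<ge> 1" and b: "b \<in> H2"
  shows "Wstar n b = block_sum n b"
  unfolding Wstar_def
proof (rule the_equality)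
  show "block_sum n b \<in> H2 \<and> (\<forall>a\<in>H2. h2_inner (W n a) b = h2_inner a (block_sum n b))"
    using block_sum_in_H2[OF n b] h2_inner_W[OF n _ b] by blast
next
  fix c assume c: "c \<in> H2 \<and> (\<forall>a\<in>H2. h2_inner (W n a) b = h2_inner a c)"
  show "c = block_sum n b"
  proof
    fix q :: nat
    let ?\<delta> = "\<lambda>j. if j = q then 1 else 0 :: complex"
    have "cnj (c q) = h2_inner (W n ?\<delta>) b"
      using c H2_delta by (simp add: h2_inner_delta)
    also have "\<dots> = cnj (block_sum n b q)"
      by (simp add: h2_inner_W[OF n H2_delta b] h2_inner_delta)
    finally show "c q = block_sum n b q"
      by simp
  qed
qed

lemma Wstar_in_H2: "n \<ge> 1 \<Longrightarrow> b \<in> H2 \<Longrightarrow> Wstar n b \<in> H2"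
  by (simp add: Wstar_eq_block_sum block_sum_in_H2)

lemma h2_inner_Wstar:
  assumes n: "n \<ge> 1" and a: "a \<in> H2" and b: "b \<in> H2"
  shows "h2_inner (Wstar n b) a = h2_inner b (W n a)"
  using h2_inner_W[OF assms] Wstar_eq_block_sum[OF n b]
    h2_inner_commute[OF a Wstar_in_H2[OF n b]] h2_inner_commute[OF W_in_H2[OF n a] b]
  by simp

lemma W_iterate_in_H2: "n \<ge> 1 \<Longrightarrow> a \<in> H2 \<Longrightarrow> (W n ^^ m) a \<in> H2"
  by (induction m) (simp_all add: W_in_H2)

lemma Wstar_iterate_in_H2: "n \<ge> 1 \<Longrightarrow> f \<in> H2 \<Longrightarrow> (Wstar n ^^ m) f \<in> H2"
  by (induction m) (simp_all add: Wstar_in_H2)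

lemma h2_inner_Wstar_iterate:
  assumes n: "n \<ge> 1" and "f \<in> H2" "v \<in> H2"
  shows "h2_inner ((Wstar n ^^ m) f) v = h2_inner f ((W n ^^ m) v)"
  using assms(2,3)
proof (induction m arbitrary: f)
  case (Suc m)
  have "h2_inner ((Wstar n ^^ Suc m) f) v = h2_inner (Wstar n f) ((W n ^^ m) v)"
    using Suc Wstar_in_H2[OF n] by (simp add: funpow_Suc_right del: funpow.simps)
  also have "\<dots> = h2_inner f ((W n ^^ Suc m) v)"
    using h2_inner_Wstar[OF n W_iterate_in_H2[OF n Suc(3)] Suc(2)] by simp
  finally show ?case .
qed simp

section \<open>The differences \<open>h\<^sub>k - h\<^sub>l\<close>\<close>

lemma h_diff_eq_taylor_coeff:
  assumes "k \<ge> 1" "l \<ge> 1"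
  shows "(\<lambda>j. h k j - h l j) = taylor_coeff (\<lambda>z. (logbr k z - logbr l z) / (1 - z))"
proof
  fix j
  have "(\<lambda>z. logbr k z / (1 - z)) holomorphic_on ball 0 1"
    "(\<lambda>z. logbr l z / (1 - z)) holomorphic_on ball 0 1"
    using assms by (auto intro!: holomorphic_intros logbr_holomorphic)
  from taylor_coeff_diff[OF this zero_less_one, of j]
  show "h k j - h l j = taylor_coeff (\<lambda>z. (logbr k z - logbr l z) / (1 - z)) j"
    unfolding h_def by (simp add: diff_divide_distrib)
qed

lemma h_diff_at_0:
  assumes "k \<ge> 1" "l \<ge> 1"
  shows "h k 0 - h l 0 = of_real (ln (real l) - ln (real k))"
  using fun_cong[OF h_diff_eq_taylor_coeff[OF assms], of 0] assms
  by (simp add: taylor_coeff_0 logbr_at_0)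

lemma W_h_diff:
  assumes n: "n \<ge> 1" and k: "k \<ge> 1" and l: "l \<ge> 1"
  shows "W n (\<lambda>j. h k j - h l j) = (\<lambda>j. h (k * n) j - h (l * n) j)"
proof -
  let ?F = "\<lambda>k l z. (logbr k z - logbr l z) / (1 - z)"
  have "W n (\<lambda>j. h k j - h l j) = taylor_coeff (\<lambda>z. (\<Sum>i<n. z ^ i) * h2_fun (taylor_coeff (?F k l)) (z ^ n))"
    unfolding W_def h_diff_eq_taylor_coeff[OF k l] ..
  also have "\<dots> = taylor_coeff (?F (k * n) (l * n))"
  proof (rule taylor_coeff_cong[OF zero_less_one])
    fix z :: complex assume z: "z \<in> ball 0 1"
    have "?F k l holomorphic_on ball 0 1"
      using k l by (auto intro!: holomorphic_intros logbr_holomorphic)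
    then have "h2_fun (taylor_coeff (?F k l)) (z ^ n) = ?F k l (z ^ n)"
      using h2_fun_taylor_coeff power_in_unit_disc[OF z n] by blast
    also have "\<dots> = (logbr (k * n) z - logbr (l * n) z) / (1 - z ^ n)"
      using logbr_power[OF k n z] logbr_power[OF l n z] by simp
    also have "\<dots> = (logbr (k * n) z - logbr (l * n) z) / ((1 - z) * (\<Sum>i<n. z ^ i))"
      by (simp only: one_diff_power_eq)
    finally show "(\<Sum>i<n. z ^ i) * h2_fun (taylor_coeff (?F k l)) (z ^ n) = ?F (k * n) (l * n) z"
      using sum_power_nonzero[OF z n] by simp
  qed
  also have "\<dots> = (\<lambda>j. h (k * n) j - h (l * n) j)"
    using k l n by (simp add: h_diff_eq_taylor_coeff)
  finally show ?thesis .
qed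

lemma W_iterate_h_diff:
  assumes n: "n \<ge> 1" and k: "k \<ge> 1" and l: "l \<ge> 1"
  shows "(W n ^^ m) (\<lambda>j. h k j - h l j) = (\<lambda>j. h (k * n ^ m) j - h (l * n ^ m) j)"
proof (induction m)
  case (Suc m)
  have "k * n ^ m \<ge> 1" "l * n ^ m \<ge> 1"
    using n k l by simp_all
  with Suc show ?case
    by (simp add: W_h_diff[OF n] mult.assoc mult.commute[of n])
qed simp

lemma h_diff_in_Mspace:
  assumes "k \<ge> 2" "l \<ge> 2"
  shows "(\<lambda>j. h k j - h l j) \<in> Mspace"
  unfolding Mspace_def cspan_seq_def
proof (intro CollectI exI conjI)
  let ?g = "\<lambda>j. h k j - h l j"
  show "finite {?g}"
    by simp
  show "{?g} \<subseteq> {\<lambda>j. h k j - h l j |k l. k \<ge> 2 \<and> l \<ge> 2}"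
    using assms by blast
  show "?g = (\<lambda>j. \<Sum>g\<in>{?g}. (\<lambda>_. 1) g * g j)"
    by simp
qed

section \<open>Coefficients of \<open>h\<^sub>4 - h\<^sub>2\<close>\<close>

definition alt_harmonic_remainder :: "nat \<Rightarrow> real" where
  "alt_harmonic_remainder M = (\<Sum>k<M. (-1) ^ k / real (Suc k)) - ln 2"

lemma abs_alt_harmonic_remainder_le: "\<bar>alt_harmonic_remainder M\<bar> \<le> 1 / real (Suc M)"
proof -
  define f where "f k = (-1) ^ k / real (Suc k)" for k
  define a where "a i = 1 / real (Suc (i + M))" for i
  have a_lim: "a \<longlonglongrightarrow> 0"
    unfolding a_def using LIMSEQ_ignore_initial_segment[OF LIMSEQ_inverse_real_of_nat, of M]
    by (simp add: divide_inverse)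
  have a_nonneg: "\<And>i. 0 \<le> a i" and a_decr: "\<And>i. a (Suc i) \<le> a i"
    by (simp_all add: a_def frac_le)
  note leibniz = summable_Leibniz'[OF a_lim a_nonneg a_decr]
  have "0 \<le> (\<Sum>i. (-1) ^ i * a i)" "(\<Sum>i. (-1) ^ i * a i) \<le> a 0"
    using leibniz(2)[of 0] leibniz(4)[of 0] by simp_all
  have "f sums ln 2"
    unfolding f_def by (rule alternating_harmonic_series_sums)
  then have "alt_harmonic_remainder M = - (\<Sum>i. f (i + M))"
    using suminf_split_initial_segment[of f M] by (simp add: alt_harmonic_remainder_def f_def sums_iff)
  also have "(\<lambda>i. f (i + M)) = (\<lambda>i. (-1) ^ M * ((-1) ^ i * a i))"
    by (auto simp: f_def a_def power_add)
  finally have "\<bar>alt_harmonic_remainder M\<bar> = \<bar>\<Sum>i. (-1) ^ i * a i\<bar>"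
    by (simp add: suminf_mult[OF leibniz(1)] abs_mult)
  with \<open>0 \<le> (\<Sum>i. (-1) ^ i * a i)\<close> \<open>(\<Sum>i. (-1) ^ i * a i) \<le> a 0\<close> show ?thesis
    by (simp add: a_def)
qed

definition h42_coeff :: "nat \<Rightarrow> complex" where
  "h42_coeff j = of_real (alt_harmonic_remainder (j div 2))"

lemma h42_coeff_in_H2: "h42_coeff \<in> H2"
proof -
  have "summable (\<lambda>j. (cmod (h42_coeff j))\<^sup>2)"
  proof (rule summable_comparison_test')
    show "summable (\<lambda>j. 4 * inverse (real (Suc j) ^ 2))"
      using summable_ignore_initial_segment[OF inverse_power_summable[of 2], of 1]
      by (intro summable_mult) simp_all
    show "norm ((cmod (h42_coeff j))\<^sup>2) \<le> 4 * inverse (real (Suc j) ^ 2)" for j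
    proof -
      have "Suc j \<le> 2 * Suc (j div 2)"
        by presburger
      then have "real (Suc j) \<le> 2 * real (Suc (j div 2))"
        by (metis of_nat_le_iff of_nat_mult of_nat_numeral)
      have "cmod (h42_coeff j) \<le> 1 / real (Suc (j div 2))"
        using abs_alt_harmonic_remainder_le[of "j div 2"] by (simp add: h42_coeff_def)
      also have "\<dots> = 2 / (2 * real (Suc (j div 2)))"
        by (simp add: field_simps)
      also have "\<dots> \<le> 2 / real (Suc j)"
        using \<open>real (Suc j) \<le> 2 * real (Suc (j div 2))\<close> by (intro frac_le) simp_all
      finally have "(cmod (h42_coeff j))\<^sup>2 \<le> (2 / real (Suc j))\<^sup>2"
        by (intro power_mono) simp_all
      then show ?thesis
        by (simp add: power_divide divide_inverse power_inverse)
    qed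
  qed
  then show ?thesis
    by (simp add: H2_def)
qed

lemma h42_coeff_diff:
  "h42_coeff j - (if j = 0 then 0 else h42_coeff (j - 1)) =
     (if odd j then 0 else - ((-1) ^ (j div 2)) / of_nat (j div 2)) - (if j = 0 then of_real (ln 2) else 0)"
proof -
  have "j = 0 \<or> (\<exists>m. j = 2 * m + 1) \<or> (\<exists>m. j = 2 * m + 2)"
    by presburger
  then consider "j = 0" | m where "j = 2 * m + 1" | m where "j = 2 * m + 2"
    by blast
  then show ?thesis
    by cases (simp_all add: h42_coeff_def alt_harmonic_remainder_def)
qed

text \<open>The coefficient for \<open>j = 0\<close> is \<open>-1/0 = 0\<close>.\<close>

lemma ln_one_plus_square_sums:
  fixes z :: complex
  assumes "norm z < 1"
  shows "(\<lambda>j. (if odd j then 0 else - ((-1) ^ (j div 2)) / of_nat (j div 2)) * z ^ j) sums ln (1 + z\<^sup>2)"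
proof -
  have "norm (z\<^sup>2) < 1"
    using assms by (simp add: norm_power power_less_one_iff)
  from Ln_series'[OF this]
  have "(\<lambda>m. (if odd (2 * m) then 0 else - ((-1) ^ (2 * m div 2)) / of_nat (2 * m div 2)) * z ^ (2 * m))
      sums ln (1 + z\<^sup>2)"
    by (simp add: power_minus' power_mult)
  then show ?thesis
    by (subst sums_mono_reindex[of "\<lambda>m. 2 * m", symmetric]) (auto simp: strict_mono_def)
qed

lemma sums_times_one_minus:
  fixes c :: "nat \<Rightarrow> 'a::real_normed_field"
  assumes "(\<lambda>j. c j * z ^ j) sums s"
  shows "(\<lambda>j. (c j - (if j = 0 then 0 else c (j - 1))) * z ^ j) sums ((1 - z) * s)"
proof -
  have "(\<lambda>j. z * (c j * z ^ j)) sums (z * s)"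
    using sums_mult[OF assms] .
  then have "(\<lambda>j. (if j = 0 then 0 else c (j - 1)) * z ^ j) sums (z * s)"
    using sums_Suc_iff[of "\<lambda>j. (if j = 0 then 0 else c (j - 1)) * z ^ j"] by (simp add: mult_ac)
  from sums_diff[OF assms this] show ?thesis
    by (simp add: algebra_simps)
qed

lemma h42_coeff_sums:
  assumes z: "norm z < 1"
  shows "(\<lambda>j. h42_coeff j * z ^ j) sums ((ln (1 + z\<^sup>2) - of_real (ln 2)) / (1 - z))"
proof -
  obtain s where s: "(\<lambda>j. h42_coeff j * z ^ j) sums s"
    using H2_summable_power_series[OF h42_coeff_in_H2 z] by (auto simp: summable_def)
  have "(\<lambda>j. (if j = 0 then of_real (ln 2) else 0) * z ^ j) = (\<lambda>j. if j = 0 then of_real (ln 2) else 0)"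
    by auto
  then have "(\<lambda>j. (if j = 0 then of_real (ln 2) else 0) * z ^ j) sums of_real (ln 2)"
    using sums_single[of 0 "\<lambda>_. of_real (ln 2) :: complex"] by simp
  from sums_diff[OF ln_one_plus_square_sums[OF z] this]
  have "(\<lambda>j. (h42_coeff j - (if j = 0 then 0 else h42_coeff (j - 1))) * z ^ j)
      sums (ln (1 + z\<^sup>2) - of_real (ln 2))"
    by (simp add: h42_coeff_diff left_diff_distrib)
  with sums_times_one_minus[OF s] have eq: "(1 - z) * s = ln (1 + z\<^sup>2) - of_real (ln 2)"
    by (rule sums_unique2)
  have "1 - z \<noteq> 0"
    using z by auto
  then have "s = (1 - z) * s / (1 - z)"
    by simp
  with s show ?thesis
    unfolding eq by simp
qed

lemma h4_minus_h2_eq: "(\<lambda>j. h 4 j - h 2 j) = h42_coeff"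
proof -
  have "(\<lambda>j. h 4 j - h 2 j) = taylor_coeff (\<lambda>z. (logbr 4 z - logbr 2 z) / (1 - z))"
    by (rule h_diff_eq_taylor_coeff) simp_all
  also have "\<dots> = taylor_coeff (\<lambda>z. (ln (1 + z\<^sup>2) - of_real (ln 2)) / (1 - z))"
    by (rule taylor_coeff_cong[OF zero_less_one]) (simp add: logbr_4_minus_logbr_2)
  also have "\<dots> = h42_coeff"
    by (rule taylor_coeff_eqI[OF zero_less_one]) (simp add: h42_coeff_sums)
  finally show ?thesis .
qed

theorem mainTheorem19:
  fixes n :: nat
  assumes "n \<ge> 2"
  shows "Mperp \<inter> HC (Wstar n) = {}"
proof (rule ccontr)
  assume "Mperp \<inter> HC (Wstar n) \<noteq> {}"
  then obtain f where f_perp: "f \<in> Mperp" and f_HC: "f \<in> HC (Wstar n)"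
    by blast
  have n: "n \<ge> 1" and f: "f \<in> H2"
    using assms f_perp by (simp_all add: Mperp_def)
  let ?u = "\<lambda>j. h 4 j - h 2 j"
  have u: "?u \<in> H2"
    using h42_coeff_in_H2 by (simp add: h4_minus_h2_eq)
  have "0 < cmod (?u 0)"
    using h_diff_at_0[of 4 2] by simp
  then have "0 < h2_norm ?u"
    using norm_coeff_le_h2_norm[OF u, of 0] by linarith
  moreover have "\<forall>g\<in>H2. \<forall>e>0. \<exists>m. h2_norm (\<lambda>j. (Wstar n ^^ m) f j - g j) < e"
    using f_HC by (simp add: HC_def)
  ultimately obtain m where close: "h2_norm (\<lambda>j. (Wstar n ^^ m) f j - ?u j) < h2_norm ?u"
    using u by (meson bspec)
  have "(W n ^^ m) ?u \<in> Mspace"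
    using W_iterate_h_diff[OF n, of 4 2 m] h_diff_in_Mspace[of "4 * n ^ m" "2 * n ^ m"] n by simp
  then have "h2_inner ((Wstar n ^^ m) f) ?u = 0"
    using f_perp h2_inner_Wstar_iterate[OF n f u] by (simp add: Mperp_def)
  then have "h2_norm ?u \<le> h2_norm (\<lambda>j. (Wstar n ^^ m) f j - ?u j)"
    by (intro h2_norm_le_norm_diff_if_orthogonal Wstar_iterate_in_H2 n f u)
  with close show False
    by simp
qed

end
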